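(* Let $p\ge q\ge1$. Let $Q_1:\mathbb{R}\to\mathbb{R}^{d_1}$ be measurable. Fix a measurable partition $I_1,\dots,I_l$ of $[0,1]$ and a measurable set $B\subset\mathbb{R}^{1+d_1}$. For measurable $U\subset\mathbb{R}^2$ and $I\subset\mathbb{R}$ define $E^{(1)}_Ug(x_1,x_2,x_3)=\int_U g(r,s)e(x_1r+x_2s+x_3\cdot Q_1(r))\,dr\,ds$ for $(x_1,x_2,x_3)\in\mathbb{R}\times\mathbb{R}\times\mathbb{R}^{d_1}$, and $E^{(3)}_Ih(x_1,x_3)=\int_I h(r)e(x_1r+x_3\cdot Q_1(r))\,dr$, where $e(z)=e^{2\pi iz}$. Suppose $C$ is a number such that $\|E^{(3)}_{[0,1]}h\|_{L^p(B)}\le C\big(\sum_i\|E^{(3)}_{I_i}h\|_{L^p(B)}^q\big)^{1/q}$ for all measurable $h$. Then for every measurable $B'\subset\mathbb{R}$ and every measurable $g$, $\|E^{(1)}_{[0,1]^2}g\|_{L^p(B\times B')}\le C\big(\sum_i\|E^{(1)}_{I_i\times[0,1]}g\|_{L^p(B\times B')}^q\big)^{1/q}$, where $B\times B'$ denotes the set $\{(x_1,x_2,x_3):(x_1,x_3)\in B,\ x_2\in B'\}\subset\mathbb{R}^{2+d_1}$. *)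

theory Defs
  imports "HOL-Analysis.Analysis"
begin

definition e :: "real \<Rightarrow> complex" where
  "e z = exp (2 * complex_of_real pi * \<i> * complex_of_real z)"

text \<open>Real powers of extended nonnegative reals (used with positive exponents):
  infinity to a positive power is infinity.\<close>
definition enn_powr :: "ennreal \<Rightarrow> real \<Rightarrow> ennreal" where
  "enn_powr x a = (if x = top then top else ennreal (enn2real x powr a))"

definition Lp_norm :: "real \<Rightarrow> 'b measure \<Rightarrow> 'b set \<Rightarrow> ('b \<Rightarrow> complex) \<Rightarrow> ennreal" where
  "Lp_norm p M B F = enn_powr (\<integral>\<^sup>+ x\<in>B. ennreal (cmod (F x) powr p) \<partial>M) (1 / p)"

definition E1 :: "(real \<Rightarrow> 'a::euclidean_space) \<Rightarrow> (real \<times> real) set \<Rightarrow> (real \<times> real \<Rightarrow> complex)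
    \<Rightarrow> real \<times> real \<times> 'a \<Rightarrow> complex" where
  "E1 Q U g = (\<lambda>(x1, x2, x3). set_lebesgue_integral lebesgue U
      (\<lambda>(r, s). g (r, s) * e (x1 * r + x2 * s + x3 \<bullet> Q r)))"

definition E3 :: "(real \<Rightarrow> 'a::euclidean_space) \<Rightarrow> real set \<Rightarrow> (real \<Rightarrow> complex)
    \<Rightarrow> real \<times> 'a \<Rightarrow> complex" where
  "E3 Q I h = (\<lambda>(x1, x3). set_lebesgue_integral lebesgue I
      (\<lambda>r. h r * e (x1 * r + x3 \<bullet> Q r)))"

end

theory Submission
  imports Defs
begin

text \<open>Fix the middle variable \<open>x2\<close>. Integrating out \<open>s\<close> first turns
  \<open>E1 Q (J \<times> {0..1}) g (x1, x2, x3)\<close> into \<open>E3 Q J (h x2) (x1, x3)\<close>, where \<open>h x2 r\<close> is the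
  integral of \<open>g (r, s) * e (x2 * s)\<close> over \<open>s \<in> [0, 1]\<close>. By Tonelli in \<open>x2\<close>, the \<open>L^p(B \<times> B')\<close>
  norm of \<open>E1\<close> is therefore the \<open>L^p(B')\<close> norm of the function that maps \<open>x2\<close> to the
  \<open>L^p(B)\<close> norm of \<open>E3 Q J (h x2)\<close>. The hypothesis, applied to every \<open>h x2\<close>, bounds this
  function pointwise by \<open>C\<close> times an \<open>l^q\<close>-sum of the corresponding functions for the \<open>I i\<close>;
  as \<open>p / q \<ge> 1\<close>, Minkowski's inequality in \<open>L^(p/q)\<close> moves the \<open>l^q\<close>-sum outside the
  \<open>L^p(B')\<close> norm.\<close>

section \<open>Real powers of extended nonnegative reals\<close>

lemma enn_powr_ennreal: "0 \<le> t \<Longrightarrow> enn_powr (ennreal t) a = ennreal (t powr a)"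
  by (simp add: enn_powr_def)

lemma enn_powr_top [simp]: "enn_powr top a = top"
  by (simp add: enn_powr_def)

lemma enn_powr_0 [simp]: "enn_powr 0 a = 0"
  by (simp add: enn_powr_def)

lemma enn_powr_indicator [simp]: "enn_powr (indicator A x) a = indicator A x"
  by (simp add: enn_powr_def indicator_def)

lemma enn_powr_eq_0_iff: "0 < a \<Longrightarrow> enn_powr x a = 0 \<longleftrightarrow> x = 0"
  by (cases x) (simp_all add: enn_powr_def)

lemma enn_powr_powr: "enn_powr (enn_powr x a) b = enn_powr x (a * b)"
  by (cases x) (simp_all add: enn_powr_def powr_powr)

lemma enn_powr_1 [simp]: "enn_powr x 1 = x"
  by (cases x) (simp_all add: enn_powr_def)

lemma enn_powr_powr_inverse: "a \<noteq> 0 \<Longrightarrow> enn_powr (enn_powr x a) (1 / a) = x"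
  by (simp add: enn_powr_powr)

lemma enn_powr_mono: "0 \<le> a \<Longrightarrow> x \<le> y \<Longrightarrow> enn_powr x a \<le> enn_powr y a"
  by (cases x; cases y) (auto simp: enn_powr_def powr_mono2 top_unique)

lemma enn_powr_mult: "0 < a \<Longrightarrow> enn_powr (x * y) a = enn_powr x a * enn_powr y a"
  by (cases x; cases y)
     (auto simp: enn_powr_def ennreal_mult[symmetric] powr_mult ennreal_mult_top ennreal_top_mult)

lemma borel_measurable_enn_powr [measurable (raw)]:
  assumes [measurable]: "f \<in> borel_measurable M"
  shows "(\<lambda>x. enn_powr (f x) a) \<in> borel_measurable M"
  unfolding enn_powr_def by measurable

section \<open>Minkowski's inequality for finite sums\<close>

lemma convex_on_powr_nonneg:
  fixes r :: real assumes r: "r \<ge> 1" shows "convex_on {0..} (\<lambda>x. x powr r)"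
proof (rule convex_onI)
  fix t x y :: real assume t: "0 < t" "t < 1" and xy: "x \<in> {0..}" "y \<in> {0..}"
  have tr: "t powr r \<le> t" "(1 - t) powr r \<le> 1 - t"
    using t r by (smt (verit) powr_le1 powr_mono' powr_one_eq_one powr_one)+
  consider "x = 0 \<or> y = 0" | "x > 0" "y > 0" using xy by force
  then show "((1 - t) *\<^sub>R x + t *\<^sub>R y) powr r \<le> (1 - t) * x powr r + t * y powr r"
  proof cases
    case 1
    then show ?thesis using tr t xy by (auto simp: powr_mult mult_right_mono)
  next
    case 2
    then show ?thesis using convex_onD[OF powr_convex[OF r], of t x y] t by simp
  qed
qed simp

text \<open>Jensen's inequality for \<open>x powr r\<close> with weights \<open>n i / s\<close> at the points \<open>s * u i / n i\<close>.\<close>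
lemma powr_sum_le_weighted:
  fixes n u :: "'i \<Rightarrow> real"
  assumes S: "finite S" and r: "r \<ge> 1" and n: "\<And>i. i \<in> S \<Longrightarrow> n i > 0"
    and u: "\<And>i. i \<in> S \<Longrightarrow> u i \<ge> 0" and s: "s = (\<Sum>i\<in>S. n i)"
  shows "(\<Sum>i\<in>S. u i) powr r \<le> (\<Sum>i\<in>S. (n i / s) * (s / n i) powr r * u i powr r)"
proof (cases "S = {}")
  case False
  have "s > 0" unfolding s using S False n by (intro sum_pos) auto
  have "(\<Sum>i\<in>S. u i) = (\<Sum>i\<in>S. (n i / s) *\<^sub>R (s * u i / n i))"
    using n \<open>s > 0\<close> by (intro sum.cong) (auto dest: less_imp_neq[symmetric])
  also have "\<dots> powr r \<le> (\<Sum>i\<in>S. (n i / s) * (s * u i / n i) powr r)"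
  proof (rule convex_on_sum[OF S False convex_on_powr_nonneg[OF r]])
    show "(\<Sum>i\<in>S. n i / s) = 1" using \<open>s > 0\<close> by (simp add: s sum_divide_distrib[symmetric])
  qed (use n u \<open>s > 0\<close> in \<open>auto simp: less_imp_le zero_le_divide_iff\<close>)
  also have "\<dots> = (\<Sum>i\<in>S. (n i / s) * (s / n i) powr r * u i powr r)"
  proof (intro sum.cong refl)
    fix i assume "i \<in> S"
    then have "(s * u i / n i) powr r = (s / n i) powr r * u i powr r"
      using n u \<open>s > 0\<close> by (simp add: powr_mult[symmetric] less_imp_le)
    then show "(n i / s) * (s * u i / n i) powr r = (n i / s) * (s / n i) powr r * u i powr r"
      by simp
  qed
  finally show ?thesis .
qed simp

lemma enn_powr_sum_le_weighted:
  fixes n :: "'i \<Rightarrow> real" and v :: "'i \<Rightarrow> ennreal"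
  assumes S: "finite S" and r: "r \<ge> 1" and n: "\<And>i. i \<in> S \<Longrightarrow> n i > 0" and s: "s = (\<Sum>i\<in>S. n i)"
  shows "enn_powr (\<Sum>i\<in>S. v i) r \<le> (\<Sum>i\<in>S. ennreal ((n i / s) * (s / n i) powr r) * enn_powr (v i) r)"
proof (cases "\<exists>i\<in>S. v i = top")
  case True
  then obtain j where j: "j \<in> S" "v j = top" by blast
  have "s > 0" using j S n unfolding s by (intro sum_pos2[of S j]) (auto intro: less_imp_le)
  have "top = ennreal ((n j / s) * (s / n j) powr r) * enn_powr (v j) r"
    using j n[of j] \<open>s > 0\<close> by (simp add: ennreal_mult_top)
  also have "\<dots> \<le> (\<Sum>i\<in>S. ennreal ((n i / s) * (s / n i) powr r) * enn_powr (v i) r)"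
    using S j by (intro member_le_sum) auto
  finally show ?thesis by (simp add: top_unique)
next
  case False
  define u where "u i = enn2real (v i)" for i
  have "s \<ge> 0"
    unfolding s using n by (intro sum_nonneg) (auto intro: less_imp_le)
  have u: "u i \<ge> 0" for i
    by (simp add: u_def)
  have v: "v i = ennreal (u i)" if "i \<in> S" for i
    using False that by (cases "v i") (auto simp: u_def)
  have "(\<Sum>i\<in>S. v i) = (\<Sum>i\<in>S. ennreal (u i))"
    by (intro sum.cong) (simp_all add: v)
  also have "\<dots> = ennreal (\<Sum>i\<in>S. u i)"
    by (simp add: u_def)
  finally
  have "enn_powr (\<Sum>i\<in>S. v i) r = ennreal ((\<Sum>i\<in>S. u i) powr r)"
    by (simp add: u_def sum_nonneg enn_powr_ennreal)
  also have "\<dots> \<le> ennreal (\<Sum>i\<in>S. (n i / s) * (s / n i) powr r * u i powr r)"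
    by (intro ennreal_leI powr_sum_le_weighted[OF S r n u s])
  also have "\<dots> = (\<Sum>i\<in>S. ennreal ((n i / s) * (s / n i) powr r * u i powr r))"
    using n \<open>s \<ge> 0\<close> by (intro sum_ennreal[symmetric]) (auto simp: less_imp_le)
  also have "\<dots> = (\<Sum>i\<in>S. ennreal ((n i / s) * (s / n i) powr r) * enn_powr (v i) r)"
  proof (intro sum.cong refl)
    fix i assume "i \<in> S"
    then have "0 \<le> (n i / s) * (s / n i) powr r"
      using n \<open>s \<ge> 0\<close> by (simp add: less_imp_le)
    then show "ennreal ((n i / s) * (s / n i) powr r * u i powr r)
        = ennreal ((n i / s) * (s / n i) powr r) * enn_powr (v i) r"
      by (simp only: v[OF \<open>i \<in> S\<close>] enn_powr_ennreal[OF u] ennreal_mult[OF _ powr_ge_zero])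
  qed
  finally show ?thesis .
qed

definition enn_Lp_norm :: "real \<Rightarrow> 'a measure \<Rightarrow> ('a \<Rightarrow> ennreal) \<Rightarrow> ennreal" where
  "enn_Lp_norm p M f = enn_powr (\<integral>\<^sup>+x. enn_powr (f x) p \<partial>M) (1 / p)"

lemma enn_Lp_norm_eq_0_iff:
  assumes "0 < r" "f \<in> borel_measurable M"
  shows "enn_Lp_norm r M f = 0 \<longleftrightarrow> (AE x in M. f x = 0)"
proof -
  have "enn_Lp_norm r M f = 0 \<longleftrightarrow> (AE x in M. enn_powr (f x) r = 0)"
    using assms by (simp add: enn_Lp_norm_def enn_powr_eq_0_iff nn_integral_0_iff_AE)
  also have "\<dots> \<longleftrightarrow> (AE x in M. f x = 0)"
    using assms(1) by (simp add: enn_powr_eq_0_iff)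
  finally show ?thesis .
qed

lemma enn_Lp_norm_cong_AE:
  "(AE x in M. f x = g x) \<Longrightarrow> enn_Lp_norm p M f = enn_Lp_norm p M g"
  unfolding enn_Lp_norm_def by (subst nn_integral_cong_AE) (auto elim: eventually_mono)

lemma enn_Lp_norm_sum_le_positive:
  fixes f :: "'i \<Rightarrow> 'a \<Rightarrow> ennreal"
  assumes S: "finite S" and r: "r \<ge> 1" and f: "\<And>i. i \<in> S \<Longrightarrow> f i \<in> borel_measurable M"
    and pos: "\<And>i. i \<in> S \<Longrightarrow> 0 < enn_Lp_norm r M (f i)" "\<And>i. i \<in> S \<Longrightarrow> enn_Lp_norm r M (f i) < top"
  shows "enn_Lp_norm r M (\<lambda>x. \<Sum>i\<in>S. f i x) \<le> (\<Sum>i\<in>S. enn_Lp_norm r M (f i))"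
proof -
  define n where "n i = enn2real (enn_Lp_norm r M (f i))" for i
  have norm: "enn_Lp_norm r M (f i) = ennreal (n i)" "n i > 0" if "i \<in> S" for i
    using pos[OF that] by (cases "enn_Lp_norm r M (f i)"; simp add: n_def)+
  have N: "(\<integral>\<^sup>+x. enn_powr (f i x) r \<partial>M) = ennreal (n i powr r)" if "i \<in> S" for i
  proof -
    have "(\<integral>\<^sup>+x. enn_powr (f i x) r \<partial>M) = enn_powr (enn_Lp_norm r M (f i)) r"
      using r by (simp add: enn_Lp_norm_def enn_powr_powr)
    then show ?thesis
      using norm[OF that] by (simp add: enn_powr_ennreal)
  qed
  define s where "s = (\<Sum>i\<in>S. n i)"
  define c where "c i = (n i / s) * (s / n i) powr r" for i
  have "s \<ge> 0"
    unfolding s_def using norm by (intro sum_nonneg) (auto intro: less_imp_le)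
  have c: "c i \<ge> 0" if "i \<in> S" for i
    using norm that \<open>s \<ge> 0\<close> by (simp add: c_def less_imp_le)
  have "(\<Sum>i\<in>S. c i * n i powr r) = s powr r"
  proof (cases "S = {}")
    case False
    then have "s > 0" using S norm unfolding s_def by (intro sum_pos) auto
    then have "(\<Sum>i\<in>S. c i * n i powr r) = (\<Sum>i\<in>S. n i / s * s powr r)"
      using norm by (intro sum.cong) (auto simp: c_def powr_divide)
    also have "\<dots> = s powr r"
      using \<open>s > 0\<close> by (simp add: s_def sum_distrib_right[symmetric] sum_divide_distrib[symmetric])
    finally show ?thesis .
  qed (simp add: s_def)
  have "(\<integral>\<^sup>+x. enn_powr (\<Sum>i\<in>S. f i x) r \<partial>M) \<le> (\<integral>\<^sup>+x. (\<Sum>i\<in>S. ennreal (c i) * enn_powr (f i x) r) \<partial>M)"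
    using enn_powr_sum_le_weighted[OF S r _ s_def] norm by (intro nn_integral_mono) (auto simp: c_def)
  also have "\<dots> = (\<Sum>i\<in>S. ennreal (c i) * ennreal (n i powr r))"
    using f N by (subst nn_integral_sum) (auto simp: nn_integral_cmult intro!: sum.cong)
  also have "\<dots> = ennreal (s powr r)"
    using c \<open>(\<Sum>i\<in>S. c i * n i powr r) = s powr r\<close> by (simp add: ennreal_mult[symmetric] sum_ennreal)
  finally have "enn_Lp_norm r M (\<lambda>x. \<Sum>i\<in>S. f i x) \<le> enn_powr (ennreal (s powr r)) (1 / r)"
    unfolding enn_Lp_norm_def using r by (intro enn_powr_mono) auto
  also have "\<dots> = ennreal s"
    using r \<open>s \<ge> 0\<close> by (simp add: enn_powr_ennreal powr_powr)
  also have "\<dots> = (\<Sum>i\<in>S. ennreal (n i))"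
    using norm by (simp add: s_def less_imp_le)
  also have "\<dots> = (\<Sum>i\<in>S. enn_Lp_norm r M (f i))"
    using norm by (intro sum.cong) auto
  finally show ?thesis .
qed

lemma enn_Lp_norm_sum_le:
  fixes f :: "'i \<Rightarrow> 'a \<Rightarrow> ennreal"
  assumes S: "finite S" and r: "r \<ge> 1" and f: "\<And>i. i \<in> S \<Longrightarrow> f i \<in> borel_measurable M"
  shows "enn_Lp_norm r M (\<lambda>x. \<Sum>i\<in>S. f i x) \<le> (\<Sum>i\<in>S. enn_Lp_norm r M (f i))"
proof (cases "\<exists>i\<in>S. enn_Lp_norm r M (f i) = top")
  case True
  then obtain j where j: "j \<in> S" "enn_Lp_norm r M (f j) = top" by blast
  have "top \<le> (\<Sum>i\<in>S. enn_Lp_norm r M (f i))"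
    using member_le_sum[of j S "\<lambda>i. enn_Lp_norm r M (f i)"] j S by simp
  then show ?thesis by (simp add: top_unique)
next
  case False
  \<comment> \<open>Components of norm zero vanish almost everywhere and are dropped, so that the
    remaining norms can serve as positive weights.\<close>
  define S' where "S' = {i\<in>S. enn_Lp_norm r M (f i) \<noteq> 0}"
  have "S' \<subseteq> S" "finite S'" using S by (auto simp: S'_def)
  have "AE x in M. \<forall>i\<in>S - S'. f i x = 0"
    using S f r by (subst AE_finite_all) (auto simp: S'_def enn_Lp_norm_eq_0_iff)
  then have "AE x in M. (\<Sum>i\<in>S. f i x) = (\<Sum>i\<in>S'. f i x)"
    by (rule eventually_mono) (use S \<open>S' \<subseteq> S\<close> in \<open>simp add: sum.mono_neutral_right\<close>)
  then have "enn_Lp_norm r M (\<lambda>x. \<Sum>i\<in>S. f i x) = enn_Lp_norm r M (\<lambda>x. \<Sum>i\<in>S'. f i x)"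
    by (rule enn_Lp_norm_cong_AE)
  also have "\<dots> \<le> (\<Sum>i\<in>S'. enn_Lp_norm r M (f i))"
    using \<open>finite S'\<close> r f False by (intro enn_Lp_norm_sum_le_positive) (auto simp: S'_def less_top zero_less_iff_neq_zero)
  also have "\<dots> \<le> (\<Sum>i\<in>S. enn_Lp_norm r M (f i))"
    using S \<open>S' \<subseteq> S\<close> by (intro sum_mono2) auto
  finally show ?thesis .
qed

lemma enn_Lp_norm_mono_AE:
  "0 \<le> p \<Longrightarrow> (AE x in M. f x \<le> g x) \<Longrightarrow> enn_Lp_norm p M f \<le> enn_Lp_norm p M g"
  unfolding enn_Lp_norm_def
  by (intro enn_powr_mono nn_integral_mono_AE) (auto elim: eventually_mono intro: enn_powr_mono)

lemma enn_Lp_norm_cmult: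
  assumes "0 < p" "f \<in> borel_measurable M"
  shows "enn_Lp_norm p M (\<lambda>x. c * f x) = c * enn_Lp_norm p M f"
  using assms
  by (simp add: enn_Lp_norm_def enn_powr_mult nn_integral_cmult enn_powr_powr)

lemma enn_Lp_norm_enn_powr:
  assumes "p * a \<noteq> 0"
  shows "enn_Lp_norm p M (\<lambda>x. enn_powr (f x) a) = enn_powr (enn_Lp_norm (p * a) M f) a"
  using assms by (simp add: enn_Lp_norm_def enn_powr_powr mult.commute)

lemma enn_Lp_norm_le_lq_sum:
  fixes F :: "'a \<Rightarrow> ennreal" and G :: "'i \<Rightarrow> 'a \<Rightarrow> ennreal"
  assumes S: "finite S" and q: "1 \<le> q" "q \<le> p"
    and G: "\<And>i. i \<in> S \<Longrightarrow> G i \<in> borel_measurable M"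
    and F: "AE x in M. F x \<le> c * enn_powr (\<Sum>i\<in>S. enn_powr (G i x) q) (1 / q)"
  shows "enn_Lp_norm p M F \<le> c * enn_powr (\<Sum>i\<in>S. enn_powr (enn_Lp_norm p M (G i)) q) (1 / q)"
proof -
  have "0 < q" "0 < p" using q by auto
  define r where "r = p / q"
  have r: "r \<ge> 1" "r * q = p" "p * (1 / q) = r"
    using q \<open>0 < q\<close> by (auto simp: r_def)
  have G_powr: "enn_Lp_norm r M (\<lambda>x. enn_powr (G i x) q) = enn_powr (enn_Lp_norm p M (G i)) q" for i
    using r \<open>0 < p\<close> by (simp add: enn_Lp_norm_enn_powr)
  have "enn_Lp_norm p M F \<le> enn_Lp_norm p M (\<lambda>x. c * enn_powr (\<Sum>i\<in>S. enn_powr (G i x) q) (1 / q))"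
    using \<open>0 < p\<close> F by (intro enn_Lp_norm_mono_AE) auto
  also have "\<dots> = c * enn_Lp_norm p M (\<lambda>x. enn_powr (\<Sum>i\<in>S. enn_powr (G i x) q) (1 / q))"
    using \<open>0 < p\<close> G by (intro enn_Lp_norm_cmult) auto
  also have "enn_Lp_norm p M (\<lambda>x. enn_powr (\<Sum>i\<in>S. enn_powr (G i x) q) (1 / q))
      = enn_powr (enn_Lp_norm r M (\<lambda>x. \<Sum>i\<in>S. enn_powr (G i x) q)) (1 / q)"
    using r \<open>0 < p\<close> \<open>0 < q\<close> by (simp add: enn_Lp_norm_enn_powr)
  also have "\<dots> \<le> enn_powr (\<Sum>i\<in>S. enn_Lp_norm r M (\<lambda>x. enn_powr (G i x) q)) (1 / q)"
    using \<open>0 < q\<close> S r G by (intro enn_powr_mono enn_Lp_norm_sum_le) auto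
  finally show ?thesis
    by (simp add: G_powr mult_left_mono)
qed

section \<open>Lebesgue measure on product spaces\<close>

lemma sigma_finite_measure_completion:
  assumes "sigma_finite_measure M"
  shows "sigma_finite_measure (completion M)"
proof
  obtain A where "countable A" "A \<subseteq> sets M" "\<Union>A = space M" "\<forall>a\<in>A. emeasure M a \<noteq> \<infinity>"
    using sigma_finite_measure.sigma_finite_countable[OF assms] by blast
  then show "\<exists>A. countable A \<and> A \<subseteq> sets (completion M) \<and> \<Union>A = space (completion M) \<and>
      (\<forall>a\<in>A. emeasure (completion M) a \<noteq> \<infinity>)"
    by (intro exI[of _ A]) auto
qed

lemma borel_measurable_continuous_lborel:
  fixes f :: "'a::euclidean_space \<Rightarrow> 'b::topological_space"
  assumes "continuous_on UNIV f"
  shows "f \<in> borel_measurable lborel" and "f \<in> borel_measurable lebesgue"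
  using borel_measurable_continuous_onI[OF assms] by (simp_all add: measurable_completion)

lemma sets_lebesgue_Times:
  assumes "S \<in> sets (lebesgue :: 'a::euclidean_space measure)"
    and "T \<in> sets (lebesgue :: 'b::euclidean_space measure)"
  shows "S \<times> T \<in> sets (lebesgue :: ('a \<times> 'b) measure)"
proof -
  obtain S0 N NS where S: "S = S0 \<union> N" "N \<subseteq> NS" "NS \<in> null_sets lborel" "S0 \<in> sets lborel"
    using sets_completionE[OF assms(1)] by metis
  obtain T0 M NT where T: "T = T0 \<union> M" "M \<subseteq> NT" "NT \<in> null_sets lborel" "T0 \<in> sets lborel"
    using sets_completionE[OF assms(2)] by metis
  have "S0 \<times> T0 \<in> sets (lborel \<Otimes>\<^sub>M lborel)"
    using S T by auto
  then have main: "S0 \<times> T0 \<in> sets (lborel :: ('a \<times> 'b) measure)"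
    by (simp only: lborel_prod)
  have "NS \<times> UNIV \<union> UNIV \<times> NT \<in> null_sets (lborel \<Otimes>\<^sub>M lborel)"
    using S T by (intro null_sets.Un lborel.times_in_null_sets1 lborel.times_in_null_sets2) auto
  then have null: "NS \<times> UNIV \<union> UNIV \<times> NT \<in> null_sets (lborel :: ('a \<times> 'b) measure)"
    by (simp only: lborel_prod)
  show ?thesis
    by (rule sets_completionI[of _ "S0 \<times> T0" "S \<times> T - S0 \<times> T0", OF _ _ null main])
       (use S T in auto)
qed

lemma borel_measurable_lebesgue_fst:
  assumes "f \<in> borel_measurable (lebesgue :: 'a::euclidean_space measure)"
  shows "(\<lambda>w. f (fst w)) \<in> borel_measurable (lebesgue :: ('a \<times> 'b::euclidean_space) measure)"
proof (rule measurableI)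
  fix A :: "'c set" assume "A \<in> sets borel"
  then have "f -` A \<in> sets lebesgue"
    using measurable_sets[OF assms] by auto
  then have "f -` A \<times> UNIV \<in> sets (lebesgue :: ('a \<times> 'b) measure)"
    by (rule sets_lebesgue_Times) simp
  moreover have "(\<lambda>w. f (fst w)) -` A \<inter> space lebesgue = f -` A \<times> (UNIV :: 'b set)"
    by auto
  ultimately show "(\<lambda>w. f (fst w)) -` A \<inter> space lebesgue \<in> sets (lebesgue :: ('a \<times> 'b) measure)"
    by simp
qed auto

lemma (in complete_measure) measurable_AE_cong:
  assumes f: "f \<in> M \<rightarrow>\<^sub>M N" and fg: "AE x in M. f x = g x" and g: "\<And>x. x \<in> space M \<Longrightarrow> g x \<in> space N"
  shows "g \<in> M \<rightarrow>\<^sub>M N"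
proof (rule measurableI)
  fix A assume "A \<in> sets N"
  show "g -` A \<inter> space M \<in> sets M"
  proof (rule in_sets_AE)
    show "AE x in M. x \<in> f -` A \<inter> space M \<longleftrightarrow> x \<in> g -` A \<inter> space M"
      using fg by (elim eventually_mono) auto
  qed (use measurable_sets[OF f \<open>A \<in> sets N\<close>] in auto)
qed (rule g)

lemma completion_ex_borel_measurable_complex:
  fixes f :: "'a \<Rightarrow> complex"
  assumes "f \<in> borel_measurable (completion M)"
  shows "\<exists>f'\<in>borel_measurable M. AE x in M. f x = f' x"
proof -
  have "(\<lambda>x. Re (f x)) \<in> borel_measurable (completion M)" "(\<lambda>x. Im (f x)) \<in> borel_measurable (completion M)"
    using assms by auto
  then obtain fr fi where fr: "fr \<in> borel_measurable M" "AE x in M. Re (f x) = fr x"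
    and fi: "fi \<in> borel_measurable M" "AE x in M. Im (f x) = fi x"
    using completion_ex_borel_measurable_real by metis
  show ?thesis
  proof (intro bexI)
    show "AE x in M. f x = complex_of_real (fr x) + \<i> * complex_of_real (fi x)"
      using fr(2) fi(2) by eventually_elim (simp add: complex_eq_iff)
    show "(\<lambda>x. complex_of_real (fr x) + \<i> * complex_of_real (fi x)) \<in> borel_measurable M"
      using fr(1) fi(1) by measurable
  qed
qed

lemma lebesgue_Fubini_integral:
  fixes f :: "'a::euclidean_space \<times> 'b::euclidean_space \<Rightarrow> complex"
  assumes f: "integrable lebesgue f"
  shows "(\<lambda>x. \<integral>y. f (x, y) \<partial>lebesgue) \<in> borel_measurable lebesgue"
    and "integral\<^sup>L lebesgue f = (\<integral>x. (\<integral>y. f (x, y) \<partial>lebesgue) \<partial>lebesgue)"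
proof -
  have [measurable]: "f \<in> borel_measurable lebesgue"
    using f by auto
  obtain f' where f': "f' \<in> borel_measurable lborel" and ae: "AE z in lborel. f z = f' z"
    using completion_ex_borel_measurable_complex[of f lborel] by auto
  have [measurable]: "f' \<in> borel_measurable (lborel \<Otimes>\<^sub>M lborel)"
    using f' by (simp only: lborel_prod)
  have "integrable lebesgue f'"
    by (rule integrable_cong_AE_imp[OF f measurable_completion[OF f'] AE_completion[OF ae]])
  then have "integrable (lborel \<Otimes>\<^sub>M lborel) f'"
    using integrable_completion[OF f'] by (simp only: lborel_prod)
  define F where "F x = (\<integral>y. f' (x, y) \<partial>lborel)" for x
  have F: "F \<in> borel_measurable lborel"
    unfolding F_def by measurable
  have "AE x in lborel. AE y in lborel. f (x, y) = f' (x, y)"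
    using ae by (intro lborel_pair.AE_pair) (simp only: lborel_prod)
  then have "AE x in lborel. F x = (\<integral>y. f (x, y) \<partial>lebesgue)"
  proof (rule eventually_mono)
    fix x assume "AE y in lborel. f (x, y) = f' (x, y)"
    then have ae_x: "AE y in lebesgue. f' (x, y) = f (x, y)"
      by (auto intro: AE_completion elim: eventually_mono)
    have "(\<lambda>y. f' (x, y)) \<in> borel_measurable lebesgue"
      by (rule measurable_completion) measurable
    moreover from this have "(\<lambda>y. f (x, y)) \<in> borel_measurable lebesgue"
      by (rule completion.measurable_AE_cong[OF _ ae_x]) simp
    ultimately show "F x = (\<integral>y. f (x, y) \<partial>lebesgue)"
      unfolding F_def using ae_x by (subst integral_completion[symmetric]) (auto intro: integral_cong_AE)
  qed
  then have F_eq: "AE x in lebesgue. F x = (\<integral>y. f (x, y) \<partial>lebesgue)"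
    by (rule AE_completion)
  show inner: "(\<lambda>x. \<integral>y. f (x, y) \<partial>lebesgue) \<in> borel_measurable lebesgue"
    by (rule completion.measurable_AE_cong[OF measurable_completion[OF F] F_eq]) simp
  have "integral\<^sup>L lebesgue f = integral\<^sup>L lborel f'"
    using measurable_completion[OF f'] AE_completion[OF ae]
    by (subst integral_completion[OF f', symmetric]) (auto intro: integral_cong_AE)
  also have "\<dots> = (\<integral>x. F x \<partial>lborel)"
    unfolding F_def using lborel_pair.integral_fst'[OF \<open>integrable (lborel \<Otimes>\<^sub>M lborel) f'\<close>]
    by (simp add: lborel_prod)
  also have "\<dots> = (\<integral>x. (\<integral>y. f (x, y) \<partial>lebesgue) \<partial>lebesgue)"
    using measurable_completion[OF F] inner F_eq
    by (subst integral_completion[OF F, symmetric]) (auto intro: integral_cong_AE)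
  finally show "integral\<^sup>L lebesgue f = (\<integral>x. (\<integral>y. f (x, y) \<partial>lebesgue) \<partial>lebesgue)" .
qed

lemma nn_integral_lborel_fst:
  fixes G :: "'a::euclidean_space \<times> 'b::euclidean_space \<Rightarrow> ennreal"
  assumes "G \<in> borel_measurable (lborel \<Otimes>\<^sub>M lborel)"
  shows "(\<integral>\<^sup>+z. G z \<partial>lborel) = (\<integral>\<^sup>+x. \<integral>\<^sup>+y. G (x, y) \<partial>lborel \<partial>lborel)"
  using lborel.nn_integral_fst[OF assms] by (simp add: lborel_prod)

lemma lborel_Tonelli_middle:
  fixes G :: "real \<times> real \<times> 'a::euclidean_space \<Rightarrow> ennreal"
  assumes "G \<in> borel_measurable lborel"
  shows "(\<lambda>x2. \<integral>\<^sup>+y. G (fst y, x2, snd y) \<partial>lborel) \<in> borel_measurable lborel"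
    and "(\<integral>\<^sup>+z. G z \<partial>lborel) = (\<integral>\<^sup>+x2. (\<integral>\<^sup>+y. G (fst y, x2, snd y) \<partial>lborel) \<partial>lborel)"
proof -
  have G[measurable]: "G \<in> borel_measurable (lborel \<Otimes>\<^sub>M (lborel \<Otimes>\<^sub>M lborel))"
    using assms by (simp only: lborel_prod)
  have "(\<lambda>(x2, y). G (fst y, x2, snd y)) \<in> borel_measurable (lborel \<Otimes>\<^sub>M (lborel \<Otimes>\<^sub>M lborel))"
    by measurable
  then have "(\<lambda>(x2, y). G (fst y, x2, snd y)) \<in> borel_measurable (lborel \<Otimes>\<^sub>M (lborel :: (real \<times> 'a) measure))"
    by (simp only: lborel_prod)
  then show "(\<lambda>x2. \<integral>\<^sup>+y. G (fst y, x2, snd y) \<partial>lborel) \<in> borel_measurable lborel"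
    by (rule lborel.borel_measurable_nn_integral)
  have "(\<integral>\<^sup>+z. G z \<partial>lborel) = (\<integral>\<^sup>+x1. \<integral>\<^sup>+w. G (x1, w) \<partial>lborel \<partial>lborel)"
    using assms by (intro nn_integral_lborel_fst) (simp only: lborel_prod)
  also have "\<dots> = (\<integral>\<^sup>+x1. \<integral>\<^sup>+x2. \<integral>\<^sup>+x3. G (x1, x2, x3) \<partial>lborel \<partial>lborel \<partial>lborel)"
    by (subst nn_integral_lborel_fst) simp_all
  also have "\<dots> = (\<integral>\<^sup>+x2. \<integral>\<^sup>+x1. \<integral>\<^sup>+x3. G (x1, x2, x3) \<partial>lborel \<partial>lborel \<partial>lborel)"
    by (rule lborel_pair.Fubini') measurable
  also have "\<dots> = (\<integral>\<^sup>+x2. (\<integral>\<^sup>+y. G (fst y, x2, snd y) \<partial>lborel) \<partial>lborel)"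
    by (subst nn_integral_lborel_fst[where G = "\<lambda>y. G (fst y, _, snd y)"]) simp_all
  finally show "(\<integral>\<^sup>+z. G z \<partial>lborel) = (\<integral>\<^sup>+x2. (\<integral>\<^sup>+y. G (fst y, x2, snd y) \<partial>lborel) \<partial>lborel)" .
qed

lemma measurable_lborel_middle:
  shows "(\<lambda>z :: real \<times> real \<times> 'a::euclidean_space. (fst z, snd (snd z))) \<in> lborel \<rightarrow>\<^sub>M lborel"
    and "(\<lambda>z :: real \<times> real \<times> 'a. fst (snd z)) \<in> lborel \<rightarrow>\<^sub>M lborel"
    and "(\<lambda>y :: real \<times> 'a. (fst y, x2, snd y)) \<in> lborel \<rightarrow>\<^sub>M lborel"
  by (simp_all add: borel_measurable_continuous_onI continuous_intros)

lemma AE_lborel_middleI: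
  fixes P :: "real \<times> real \<times> 'a::euclidean_space \<Rightarrow> bool"
  assumes P[measurable]: "Measurable.pred lborel P"
    and AE: "AE x2 in lborel. AE y in lborel. P (fst y, x2, snd y)"
  shows "AE z in lborel. P z"
proof -
  have [measurable]: "(\<lambda>y :: real \<times> 'a. (fst y, x2, snd y)) \<in> lborel \<rightarrow>\<^sub>M lborel" for x2
    by (rule measurable_lborel_middle)
  have "(\<integral>\<^sup>+z. indicator {z. \<not> P z} z \<partial>lborel)
      = (\<integral>\<^sup>+x2. (\<integral>\<^sup>+y. indicator {z. \<not> P z} (fst y, x2, snd y) \<partial>lborel) \<partial>lborel)"
    by (rule lborel_Tonelli_middle(2)) measurable
  also have "\<dots> = (\<integral>\<^sup>+(x2::real). 0 \<partial>lborel)"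
  proof (rule nn_integral_cong_AE)
    show "AE x2 in lborel. (\<integral>\<^sup>+y. indicator {z. \<not> P z} (fst y, x2, snd y) \<partial>lborel) = 0"
      using AE by (elim eventually_mono) (subst nn_integral_0_iff_AE; auto elim!: eventually_mono)
  qed
  finally show ?thesis
    by (subst AE_iff_nn_integral) auto
qed

lemma sets_completion_null_diff:
  assumes "S \<in> sets (completion M)"
  obtains S0 N where "S0 \<in> sets M" "N \<in> null_sets M" "\<And>x. x \<notin> N \<Longrightarrow> x \<in> S \<longleftrightarrow> x \<in> S0"
  using sets_completionE[OF assms] by (metis UnCI UnE subsetD)

lemma AE_lborel_middle_product_eq:
  fixes B B0 N :: "(real \<times> 'a::euclidean_space) set" and B' B0' N' :: "real set"
  assumes N: "N \<in> null_sets lborel" and N': "N' \<in> null_sets lborel"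
    and B0: "\<And>y. y \<notin> N \<Longrightarrow> y \<in> B \<longleftrightarrow> y \<in> B0"
    and B0': "\<And>x. x \<notin> N' \<Longrightarrow> x \<in> B' \<longleftrightarrow> x \<in> B0'"
  shows "AE z in lborel. z \<in> {(x1, x2, x3). (x1, x3) \<in> B \<and> x2 \<in> B'}
      \<longleftrightarrow> z \<in> {(x1, x2, x3). (x1, x3) \<in> B0 \<and> x2 \<in> B0'}"
proof -
  have [measurable]: "N \<in> sets lborel" "N' \<in> sets lborel"
    using N N' by auto
  note measurable_lborel_middle[measurable]
  have "AE z in lborel. fst (snd z) \<notin> N' \<and> (fst z, snd (snd z)) \<notin> N"
  proof (rule AE_lborel_middleI)
    show "AE x2 in lborel. AE y in lborel. fst (snd (fst y, x2, snd y)) \<notin> N' \<and>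
        (fst (fst y, x2, snd y), snd (snd (fst y, x2, snd y))) \<notin> N"
      using AE_not_in[OF N'] by (elim eventually_mono) (use AE_not_in[OF N] in auto)
  qed measurable
  then show ?thesis
    by (elim eventually_mono) (use B0 B0' in auto)
qed

lemma nn_integral_lebesgue_slices:
  fixes G :: "real \<times> real \<times> 'a::euclidean_space \<Rightarrow> ennreal"
  assumes G[measurable]: "G \<in> borel_measurable lborel"
    and B: "B \<in> sets lebesgue" and B': "B' \<in> sets lebesgue"
  shows "(\<lambda>x2. indicator B' x2 * (\<integral>\<^sup>+y. G (fst y, x2, snd y) * indicator B y \<partial>lebesgue))
      \<in> borel_measurable lebesgue"
    and "(\<integral>\<^sup>+z. G z * indicator {(x1, x2, x3). (x1, x3) \<in> B \<and> x2 \<in> B'} z \<partial>lebesgue)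
      = (\<integral>\<^sup>+x2. indicator B' x2 * (\<integral>\<^sup>+y. G (fst y, x2, snd y) * indicator B y \<partial>lebesgue) \<partial>lebesgue)"
proof -
  \<comment> \<open>Borel sets differing from \<open>B\<close> and \<open>B'\<close> by null sets, so that Tonelli on \<open>lborel\<close> applies.\<close>
  obtain B0 N where [measurable]: "B0 \<in> sets lborel" and N: "N \<in> null_sets lborel"
    and B0: "\<And>y. y \<notin> N \<Longrightarrow> y \<in> B \<longleftrightarrow> y \<in> B0"
    by (rule sets_completion_null_diff[OF B]) blast
  obtain B0' N' where [measurable]: "B0' \<in> sets lborel" and N': "N' \<in> null_sets lborel"
    and B0': "\<And>y. y \<notin> N' \<Longrightarrow> y \<in> B' \<longleftrightarrow> y \<in> B0'"
    by (rule sets_completion_null_diff[OF B']) blast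
  note measurable_lborel_middle[measurable]
  define G0 where "G0 z = G z * indicator {z. (fst z, snd (snd z)) \<in> B0 \<and> fst (snd z) \<in> B0'} z" for z
  have G0[measurable]: "G0 \<in> borel_measurable lborel"
    unfolding G0_def by measurable
  define A where "A x2 = (\<integral>\<^sup>+y. G0 (fst y, x2, snd y) \<partial>lborel)" for x2
  have A: "A \<in> borel_measurable lborel"
    unfolding A_def by (rule lborel_Tonelli_middle(1)[OF G0])
  have "AE x2 in lborel. A x2 = indicator B' x2 * (\<integral>\<^sup>+y. G (fst y, x2, snd y) * indicator B y \<partial>lebesgue)"
    using AE_not_in[OF N']
  proof (elim eventually_mono)
    fix x2 assume "x2 \<notin> N'"
    have "A x2 = (\<integral>\<^sup>+y. indicator B' x2 * (G (fst y, x2, snd y) * indicator B y) \<partial>lborel)"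
      unfolding A_def using AE_not_in[OF N]
      by (intro nn_integral_cong_AE, elim eventually_mono)
         (use \<open>x2 \<notin> N'\<close> B0 B0' in \<open>auto simp: G0_def indicator_def\<close>)
    then show "A x2 = indicator B' x2 * (\<integral>\<^sup>+y. G (fst y, x2, snd y) * indicator B y \<partial>lebesgue)"
      by (cases "x2 \<in> B'") (simp_all add: nn_integral_completion)
  qed
  then have A_eq: "AE x2 in lebesgue. A x2 = indicator B' x2 * (\<integral>\<^sup>+y. G (fst y, x2, snd y) * indicator B y \<partial>lebesgue)"
    by (rule AE_completion)
  show "(\<lambda>x2. indicator B' x2 * (\<integral>\<^sup>+y. G (fst y, x2, snd y) * indicator B y \<partial>lebesgue))
      \<in> borel_measurable lebesgue"
    by (rule completion.measurable_AE_cong[OF measurable_completion[OF A] A_eq]) simp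
  have "AE z in lborel. z \<in> {(x1, x2, x3). (x1, x3) \<in> B \<and> x2 \<in> B'}
      \<longleftrightarrow> z \<in> {(x1, x2, x3). (x1, x3) \<in> B0 \<and> x2 \<in> B0'}"
    by (rule AE_lborel_middle_product_eq[OF N N']) (use B0 B0' in auto)
  then have "AE z in lborel. G z * indicator {(x1, x2, x3). (x1, x3) \<in> B \<and> x2 \<in> B'} z = G0 z"
    by (elim eventually_mono) (auto simp: G0_def split_beta indicator_def)
  then have "(\<integral>\<^sup>+z. G z * indicator {(x1, x2, x3). (x1, x3) \<in> B \<and> x2 \<in> B'} z \<partial>lebesgue)
      = (\<integral>\<^sup>+z. G0 z \<partial>lborel)"
    by (simp add: nn_integral_completion cong: nn_integral_cong_AE)
  also have "\<dots> = (\<integral>\<^sup>+x2. A x2 \<partial>lebesgue)"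
    unfolding A_def by (simp add: lborel_Tonelli_middle(2)[OF G0] nn_integral_completion)
  also have "\<dots> = (\<integral>\<^sup>+x2. indicator B' x2 * (\<integral>\<^sup>+y. G (fst y, x2, snd y) * indicator B y \<partial>lebesgue) \<partial>lebesgue)"
    using A_eq by (rule nn_integral_cong_AE)
  finally show "(\<integral>\<^sup>+z. G z * indicator {(x1, x2, x3). (x1, x3) \<in> B \<and> x2 \<in> B'} z \<partial>lebesgue)
      = (\<integral>\<^sup>+x2. indicator B' x2 * (\<integral>\<^sup>+y. G (fst y, x2, snd y) * indicator B y \<partial>lebesgue) \<partial>lebesgue)" .
qed

section \<open>The extension operators\<close>

lemma norm_e [simp]: "cmod (e z) = 1"
  by (simp add: e_def)

lemma e_add: "e (a + b) = e a * e b"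
  by (simp add: e_def exp_add[symmetric] algebra_simps)

lemma borel_measurable_e [measurable]: "e \<in> borel_measurable borel"
  unfolding e_def by (intro borel_measurable_continuous_onI continuous_intros)

lemma E1_eq_integral:
  "E1 Q U g x = (\<integral>w. indicator U w *\<^sub>R (g w * e (fst x * fst w + fst (snd x) * snd w + snd (snd x) \<bullet> Q (fst w))) \<partial>lebesgue)"
  by (simp add: E1_def set_lebesgue_integral_def split_beta)

lemma E3_eq_integral:
  "E3 Q I h y = (\<integral>r. indicator I r *\<^sub>R (h r * e (fst y * r + snd y \<bullet> Q r)) \<partial>lebesgue)"
  by (simp add: E3_def set_lebesgue_integral_def split_beta)

lemma E1_eq_0_if_not_integrable:
  assumes "\<not> integrable lebesgue (\<lambda>w. indicator U w *\<^sub>R g w)"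
    and [measurable]: "U \<in> sets lebesgue" "g \<in> borel_measurable lebesgue"
  shows "E1 Q U g x = 0"
proof -
  have "\<not> integrable lebesgue
      (\<lambda>w. indicator U w *\<^sub>R (g w * e (fst x * fst w + fst (snd x) * snd w + snd (snd x) \<bullet> Q (fst w))))"
  proof
    assume "integrable lebesgue
        (\<lambda>w. indicator U w *\<^sub>R (g w * e (fst x * fst w + fst (snd x) * snd w + snd (snd x) \<bullet> Q (fst w))))"
    then have "integrable lebesgue (\<lambda>w. indicator U w *\<^sub>R g w)"
      by (rule Bochner_Integration.integrable_bound) (auto simp: norm_mult indicator_def)
    with assms(1) show False ..
  qed
  then show ?thesis
    by (simp add: E1_eq_integral not_integrable_integral_eq)
qed

lemma borel_measurable_E1:
  fixes Q :: "real \<Rightarrow> 'a::euclidean_space"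
  assumes Q: "Q \<in> borel_measurable lebesgue" and U: "U \<in> sets lebesgue"
    and g: "g \<in> borel_measurable lebesgue"
  shows "E1 Q U g \<in> borel_measurable lborel"
proof -
  interpret lebesgue: sigma_finite_measure "lebesgue :: (real \<times> real) measure"
    by (intro sigma_finite_measure_completion lborel.sigma_finite_measure_axioms)
  have [measurable]: "U \<in> sets lebesgue" "g \<in> borel_measurable lebesgue"
    "(\<lambda>w :: real \<times> real. Q (fst w)) \<in> borel_measurable lebesgue"
    using U g borel_measurable_lebesgue_fst[OF Q] by auto
  note borel_measurable_continuous_lborel[OF continuous_on_fst[OF continuous_on_id], measurable]
    borel_measurable_continuous_lborel[OF continuous_on_snd[OF continuous_on_id], measurable]
    borel_measurable_continuous_lborel[OF continuous_on_fst[OF continuous_on_snd[OF continuous_on_id]], measurable]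
    borel_measurable_continuous_lborel[OF continuous_on_snd[OF continuous_on_snd[OF continuous_on_id]], measurable]
  have "(\<lambda>(x :: real \<times> real \<times> 'a, w). indicator U w *\<^sub>R
      (g w * e (fst x * fst w + fst (snd x) * snd w + snd (snd x) \<bullet> Q (fst w))))
      \<in> borel_measurable (lborel \<Otimes>\<^sub>M lebesgue)"
    by measurable
  then show ?thesis
    unfolding E1_eq_integral[abs_def] by (rule lebesgue.borel_measurable_lebesgue_integral)
qed

text \<open>The indicator also cuts off \<open>r \<notin> [0, 1]\<close>, which makes
  the integrand integrable in \<open>(r, s)\<close> and is harmless because \<open>E3\<close> is only taken over
  subsets of \<open>[0, 1]\<close>.\<close>
definition partial_extension :: "(real \<times> real \<Rightarrow> complex) \<Rightarrow> real \<Rightarrow> real \<Rightarrow> complex" where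
  "partial_extension g x2 r =
    (\<integral>s. indicator ({0..1} \<times> {0..1}) (r, s) *\<^sub>R (g (r, s) * e (x2 * s)) \<partial>lebesgue)"

lemma borel_measurable_partial_extension:
  assumes [measurable]: "g \<in> borel_measurable lebesgue"
    and g: "integrable lebesgue (\<lambda>w. indicator ({0..1} \<times> {0..1}) w *\<^sub>R g w)"
  shows "partial_extension g x2 \<in> borel_measurable lebesgue"
proof -
  have [measurable]: "{0..1::real} \<times> {0..1::real} \<in> sets lebesgue"
    by (intro sets_lebesgue_Times) auto
  note borel_measurable_continuous_lborel(2)[OF continuous_on_snd[OF continuous_on_id], measurable]
  have "integrable lebesgue (\<lambda>w. indicator ({0..1} \<times> {0..1}) w *\<^sub>R (g w * e (x2 * snd w)))"
    by (rule Bochner_Integration.integrable_bound[OF g]) (auto simp: norm_mult indicator_def)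
  from lebesgue_Fubini_integral(1)[OF this] show ?thesis
    by (simp add: partial_extension_def[abs_def])
qed

lemma E1_Times_eq_E3:
  fixes Q :: "real \<Rightarrow> 'a::euclidean_space"
  assumes [measurable]: "Q \<in> borel_measurable lebesgue" "J \<in> sets lebesgue" "g \<in> borel_measurable lebesgue"
    and J: "J \<subseteq> {0..1}"
    and g: "integrable lebesgue (\<lambda>w. indicator ({0..1} \<times> {0..1}) w *\<^sub>R g w)"
  shows "E1 Q (J \<times> {0..1}) g (x1, x2, x3) = E3 Q J (partial_extension g x2) (x1, x3)"
proof -
  define \<phi> where "\<phi> w = indicator (J \<times> {0..1}) w *\<^sub>R (g w * e (x1 * fst w + x2 * snd w + x3 \<bullet> Q (fst w)))" for w
  have [measurable]: "J \<times> {0..1::real} \<in> sets lebesgue"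
    by (intro sets_lebesgue_Times) auto
  note borel_measurable_continuous_lborel(2)[OF continuous_on_fst[OF continuous_on_id], measurable]
    borel_measurable_continuous_lborel(2)[OF continuous_on_snd[OF continuous_on_id], measurable]
    borel_measurable_lebesgue_fst[of Q, measurable]
  have "integrable lebesgue \<phi>"
    unfolding \<phi>_def using J
    by (intro Bochner_Integration.integrable_bound[OF g]) (auto simp: norm_mult indicator_def subset_iff)
  have slice: "(\<integral>s. \<phi> (r, s) \<partial>lebesgue) = indicator J r *\<^sub>R (partial_extension g x2 r * e (x1 * r + x3 \<bullet> Q r))"
    for r
  proof -
    have "(\<lambda>s. \<phi> (r, s)) = (\<lambda>s. indicator ({0..1} \<times> {0..1}) (r, s) *\<^sub>R (g (r, s) * e (x2 * s)) *
        (indicator J r *\<^sub>R e (x1 * r + x3 \<bullet> Q r)))"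
      using J by (auto simp: \<phi>_def indicator_def subset_iff e_add[symmetric] algebra_simps)
    then have "(\<integral>s. \<phi> (r, s) \<partial>lebesgue) = partial_extension g x2 r * (indicator J r *\<^sub>R e (x1 * r + x3 \<bullet> Q r))"
      unfolding partial_extension_def by (simp only: integral_mult_left_zero)
    then show ?thesis
      by simp
  qed
  have "E1 Q (J \<times> {0..1}) g (x1, x2, x3) = integral\<^sup>L lebesgue \<phi>"
    by (simp add: E1_eq_integral \<phi>_def[abs_def])
  also have "\<dots> = (\<integral>r. (\<integral>s. \<phi> (r, s) \<partial>lebesgue) \<partial>lebesgue)"
    by (rule lebesgue_Fubini_integral(2)[OF \<open>integrable lebesgue \<phi>\<close>])
  also have "\<dots> = E3 Q J (partial_extension g x2) (x1, x3)"
    by (simp add: slice E3_eq_integral)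
  finally show ?thesis .
qed

lemma Lp_norm_E1_eq_enn_Lp_norm:
  fixes Q :: "real \<Rightarrow> 'a::euclidean_space" and B :: "(real \<times> 'a) set"
  assumes p: "0 < p"
    and [measurable]: "Q \<in> borel_measurable lebesgue" "J \<in> sets lebesgue" "g \<in> borel_measurable lebesgue"
    and J: "J \<subseteq> {0..1}"
    and g: "integrable lebesgue (\<lambda>w. indicator ({0..1} \<times> {0..1}) w *\<^sub>R g w)"
    and B: "B \<in> sets lebesgue" and B': "B' \<in> sets lebesgue"
  shows "(\<lambda>x2. indicator B' x2 * Lp_norm p lebesgue B (E3 Q J (partial_extension g x2)))
      \<in> borel_measurable lebesgue"
    and "Lp_norm p lebesgue {(x1, x2, x3). (x1, x3) \<in> B \<and> x2 \<in> B'} (E1 Q (J \<times> {0..1}) g)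
      = enn_Lp_norm p lebesgue (\<lambda>x2. indicator B' x2 * Lp_norm p lebesgue B (E3 Q J (partial_extension g x2)))"
proof -
  define N where "N x2 = indicator B' x2 * Lp_norm p lebesgue B (E3 Q J (partial_extension g x2))" for x2
  define G where "G z = ennreal (cmod (E1 Q (J \<times> {0..1}) g z) powr p)" for z
  have "J \<times> {0..1::real} \<in> sets lebesgue"
    by (intro sets_lebesgue_Times) auto
  then have [measurable]: "E1 Q (J \<times> {0..1}) g \<in> borel_measurable lborel"
    by (intro borel_measurable_E1) auto
  have G: "G \<in> borel_measurable lborel"
    unfolding G_def[abs_def] by measurable
  have "(\<integral>\<^sup>+y. G (fst y, x2, snd y) * indicator B y \<partial>lebesgue)
      = enn_powr (Lp_norm p lebesgue B (E3 Q J (partial_extension g x2))) p" for x2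
    using p E1_Times_eq_E3[OF assms(2-4) J g]
    by (simp add: Lp_norm_def G_def enn_powr_powr split_beta)
  then have slice: "indicator B' x2 * (\<integral>\<^sup>+y. G (fst y, x2, snd y) * indicator B y \<partial>lebesgue)
      = enn_powr (N x2) p" for x2
    using p by (simp add: N_def enn_powr_mult)
  note slices = nn_integral_lebesgue_slices[OF G B B', unfolded slice]
  have "N = (\<lambda>x2. enn_powr (enn_powr (N x2) p) (1 / p))"
    using p by (simp add: enn_powr_powr_inverse)
  also have "\<dots> \<in> borel_measurable lebesgue"
    using slices(1) by measurable
  finally show "N \<in> borel_measurable lebesgue" .
  show "Lp_norm p lebesgue {(x1, x2, x3). (x1, x3) \<in> B \<and> x2 \<in> B'} (E1 Q (J \<times> {0..1}) g)
      = enn_Lp_norm p lebesgue N"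
    using slices(2) by (simp add: Lp_norm_def enn_Lp_norm_def G_def)
qed

lemma Lp_norm_E1_decoupling:
  fixes Q :: "real \<Rightarrow> 'a::euclidean_space" and B :: "(real \<times> 'a) set" and I :: "'i \<Rightarrow> real set"
  assumes q: "1 \<le> q" "q \<le> p" and S: "finite S"
    and [measurable]: "Q \<in> borel_measurable lebesgue" "g \<in> borel_measurable lebesgue"
    and I: "\<And>i. i \<in> S \<Longrightarrow> I i \<in> sets lebesgue" "\<And>i. i \<in> S \<Longrightarrow> I i \<subseteq> {0..1}"
    and B: "B \<in> sets lebesgue" and B': "B' \<in> sets lebesgue"
    and decoupling: "\<And>h. h \<in> borel_measurable lebesgue \<Longrightarrow>
      Lp_norm p lebesgue B (E3 Q {0..1} h)
        \<le> ennreal C * enn_powr (\<Sum>i\<in>S. enn_powr (Lp_norm p lebesgue B (E3 Q (I i) h)) q) (1 / q)"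
  shows "Lp_norm p lebesgue {(x1, x2, x3). (x1, x3) \<in> B \<and> x2 \<in> B'} (E1 Q ({0..1} \<times> {0..1}) g)
    \<le> ennreal C * enn_powr (\<Sum>i\<in>S. enn_powr
      (Lp_norm p lebesgue {(x1, x2, x3). (x1, x3) \<in> B \<and> x2 \<in> B'} (E1 Q (I i \<times> {0..1}) g)) q) (1 / q)"
proof (cases "integrable lebesgue (\<lambda>w. indicator ({0..1} \<times> {0..1}) w *\<^sub>R g w)")
  case False
  have "{0..1::real} \<times> {0..1::real} \<in> sets lebesgue"
    by (intro sets_lebesgue_Times) auto
  with False q show ?thesis
    by (simp add: E1_eq_0_if_not_integrable Lp_norm_def)
next
  case True
  have "0 < p" using q by simp
  note norm_eq = Lp_norm_E1_eq_enn_Lp_norm[OF \<open>0 < p\<close> _ _ _ _ True B B']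
  let ?N = "\<lambda>J x2. indicator B' x2 * Lp_norm p lebesgue B (E3 Q J (partial_extension g x2))"
  have "AE x2 in lebesgue. ?N {0..1} x2 \<le> ennreal C * enn_powr (\<Sum>i\<in>S. enn_powr (?N (I i) x2) q) (1 / q)"
    using decoupling[OF borel_measurable_partial_extension[OF _ True]] by (simp add: indicator_def)
  then have "enn_Lp_norm p lebesgue (?N {0..1})
      \<le> ennreal C * enn_powr (\<Sum>i\<in>S. enn_powr (enn_Lp_norm p lebesgue (?N (I i))) q) (1 / q)"
    using q S norm_eq(1) I by (intro enn_Lp_norm_le_lq_sum) auto
  then show ?thesis
    using norm_eq(2) I by simp
qed

theorem lemma3p2:
  fixes p q C :: real and l :: nat
    and Q1 :: "real \<Rightarrow> 'a::euclidean_space"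
    and I :: "nat \<Rightarrow> real set"
    and B :: "(real \<times> 'a) set"
  assumes "p \<ge> q" and "q \<ge> 1"
    and "Q1 \<in> borel_measurable lebesgue"
    and "\<forall>i\<in>{1..l}. I i \<in> sets lebesgue"
    and "disjoint_family_on I {1..l}"
    and "(\<Union>i\<in>{1..l}. I i) = {0..1}"
    and "B \<in> sets lebesgue"
    and "\<forall>h :: real \<Rightarrow> complex. h \<in> borel_measurable lebesgue \<longrightarrow>
           Lp_norm p lebesgue B (E3 Q1 {0..1} h)
             \<le> ennreal C * enn_powr (\<Sum>i\<in>{1..l}. enn_powr (Lp_norm p lebesgue B (E3 Q1 (I i) h)) q) (1 / q)"
  shows "\<forall>(B' :: real set) (g :: real \<times> real \<Rightarrow> complex).
           B' \<in> sets lebesgue \<longrightarrow> g \<in> borel_measurable lebesgue \<longrightarrow>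
           (let BB = {(x1, x2, x3). (x1, x3) \<in> B \<and> x2 \<in> B'} in
            Lp_norm p lebesgue BB (E1 Q1 ({0..1} \<times> {0..1}) g)
              \<le> ennreal C * enn_powr (\<Sum>i\<in>{1..l}. enn_powr (Lp_norm p lebesgue BB (E1 Q1 (I i \<times> {0..1}) g)) q) (1 / q))"
  unfolding Let_def using assms(1-4,6-8)
  by (intro allI impI Lp_norm_E1_decoupling) auto

end
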